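(* Let $\beta\in(0,\tfrac12)$. Then $\mathcal{A}_\beta\ne\emptyset$; consequently $\lambda_1(\beta)=\sup\mathcal{A}_\beta$ is well-defined and strictly positive.
   Context: Tree: for an integer $m\ge2$, $\mathbb{T}_m$ has vertices the root $\emptyset$ and all finite sequences $(\emptyset,a_1,\dots,a_k)$, $a_i\in\{0,\dots,m-1\}$; $|x|$ is the level, successors of $x$ are $(x,i)$, $\hat x$ is the immediate predecessor of $x\ne\emptyset$. Operator: $p_\beta=\beta/(1-\beta)$ for $\beta\in(0,1)$. $\Delta_\beta u(\emptyset)=\frac1m\sum_{i=0}^{m-1}u(\emptyset,i)-u(\emptyset)$ and, for $x\ne\emptyset$, $\Delta_\beta u(x)=\big(\beta u(\hat x)+\frac{1-\beta}{m}\sum_{i=0}^{m-1}u(x,i)-u(x)\big)p_\beta^{-|x|}$. $\mathcal{A}_\beta=\{\lambda>0:\exists v:\mathbb{T}_m\to\mathbb{R}\text{ and constants }0<c<C\text{ with } c<v<C \text{ and } \Delta_\beta v+\lambda v\le0 \text{ on }\mathbb{T}_m\}$, $\lambda_1(\beta)=\sup\mathcal{A}_\beta$. *)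

theory Defs
  imports Complex_Main "HOL-Library.Extended_Real"
begin

text \<open>Vertices of the m-ary tree: the sequence (root, a1, ..., ak) is the list [a1,...,ak];
  the root is []. Successors of x are x @ [i], the predecessor of x is butlast x,
  the level of x is length x.\<close>

definition tree :: "nat \<Rightarrow> nat list set" where
  "tree m = {xs. \<forall>a\<in>set xs. a < m}"

definition p_beta :: "real \<Rightarrow> real" where
  "p_beta \<beta> = \<beta> / (1 - \<beta>)"

definition Delta :: "nat \<Rightarrow> real \<Rightarrow> (nat list \<Rightarrow> real) \<Rightarrow> nat list \<Rightarrow> real" where
  "Delta m \<beta> u x =
     (if x = [] then (1 / real m) * (\<Sum>i<m. u [i]) - u []
      else (\<beta> * u (butlast x) + ((1 - \<beta>) / real m) * (\<Sum>i<m. u (x @ [i])) - u x)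
           * (p_beta \<beta>) powi (- int (length x)))"

definition A_set :: "nat \<Rightarrow> real \<Rightarrow> real set" where
  "A_set m \<beta> = {l. l > 0 \<and> (\<exists>(v :: nat list \<Rightarrow> real) c C. 0 < c \<and> c < C \<and>
       (\<forall>x\<in>tree m. c < v x \<and> v x < C \<and> Delta m \<beta> v x + l * v x \<le> 0))}"

text \<open>lambda_1 as a supremum in the extended reals (a priori possibly +infinity).\<close>
definition lambda1 :: "nat \<Rightarrow> real \<Rightarrow> ereal" where
  "lambda1 m \<beta> = Sup (ereal ` A_set m \<beta>)"

end

theory Submission
  imports Defs
begin

text \<open>The radial profile \<open>v x = 1 + r ^ |x|\<close> with \<open>p_beta \<beta> < r < 1\<close> works. It lies in \<open>(1, 2]\<close>;
  at the root \<open>\<Delta>\<^sub>\<beta> v = r - 1\<close>, and at level \<open>k \<ge> 1\<close> one gets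
  \<open>\<Delta>\<^sub>\<beta> v = (r / p_beta \<beta>) ^ k \<cdot> q(r) / r\<close> with \<open>q(r) = (1 - \<beta>) r\<^sup>2 - r + \<beta>\<close>,
  whose roots are \<open>p_beta \<beta>\<close> and \<open>1\<close>. Since \<open>\<beta> < 1/2\<close> means \<open>p_beta \<beta> < 1\<close>, the quadratic
  is negative at \<open>r\<close> and \<open>(r / p_beta \<beta>) ^ k \<ge> 1\<close>, so \<open>\<Delta>\<^sub>\<beta> v \<le> -\<delta> < 0\<close> uniformly on the
  tree, and then \<open>\<Delta>\<^sub>\<beta> v + \<lambda> v \<le> 0\<close> for small \<open>\<lambda> > 0\<close>.\<close>

lemma p_beta_pos: "0 < \<beta> \<Longrightarrow> \<beta> < 1 \<Longrightarrow> 0 < p_beta \<beta>"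
  unfolding p_beta_def by simp

lemma p_beta_less_one: "\<beta> < 1/2 \<Longrightarrow> p_beta \<beta> < 1"
  unfolding p_beta_def by (simp add: field_simps)

lemma quadratic_roots_p_beta_one:
  assumes "\<beta> \<noteq> 1"
  shows "\<beta> - r + (1 - \<beta>) * r\<^sup>2 = (1 - \<beta>) * (r - p_beta \<beta>) * (r - 1)"
  using assms unfolding p_beta_def by (simp add: field_simps power2_eq_square)

lemma Delta_radial_root:
  assumes "m \<ge> 1"
  shows "Delta m \<beta> (\<lambda>x. f (length x)) [] = f 1 - f 0"
  using assms unfolding Delta_def by simp

lemma Delta_radial:
  assumes "m \<ge> 1" and "x \<noteq> []"
  shows "Delta m \<beta> (\<lambda>x. f (length x)) x =
    (\<beta> * f (length x - 1) + (1 - \<beta>) * f (length x + 1) - f (length x)) / p_beta \<beta> ^ length x"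
  using assms unfolding Delta_def by (simp add: power_int_minus divide_inverse)

lemma Delta_geometric:
  assumes "m \<ge> 1" and "x \<noteq> []" and "r \<noteq> 0"
  shows "Delta m \<beta> (\<lambda>x. 1 + r ^ length x) x =
    (r / p_beta \<beta>) ^ length x * ((\<beta> - r + (1 - \<beta>) * r\<^sup>2) / r)"
proof -
  define q where "q = \<beta> - r + (1 - \<beta>) * r\<^sup>2"
  obtain k where k: "length x = Suc k"
    using assms(2) by (cases x) auto
  have "Delta m \<beta> (\<lambda>x. 1 + r ^ length x) x
      = (\<beta> * (1 + r ^ k) + (1 - \<beta>) * (1 + r ^ (Suc k + 1)) - (1 + r ^ Suc k)) / p_beta \<beta> ^ Suc k"
    using Delta_radial[OF assms(1,2), where f = "\<lambda>n. 1 + r ^ n"] by (simp add: k)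
  also have "\<dots> = r ^ k * q / p_beta \<beta> ^ Suc k"
    unfolding q_def by (simp add: algebra_simps power2_eq_square)
  also have "\<dots> = (r / p_beta \<beta>) ^ Suc k * (q / r)"
    using assms(3) by (simp add: power_divide)
  finally show ?thesis unfolding q_def k .
qed

lemma Delta_geometric_uniformly_negative:
  assumes "m \<ge> 1" and "0 < \<beta>" and "\<beta> < 1" and "p_beta \<beta> < r" and "r < 1"
  obtains \<delta> where "\<delta> > 0" and "\<And>x. Delta m \<beta> (\<lambda>x. 1 + r ^ length x) x \<le> - \<delta>"
proof
  define q where "q = \<beta> - r + (1 - \<beta>) * r\<^sup>2"
  have p: "0 < p_beta \<beta>" using assms(2,3) by (rule p_beta_pos)
  have r: "0 < r" using p assms(4) by simp
  have "q < 0"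
    using assms(3-5) unfolding q_def quadratic_roots_p_beta_one[OF less_imp_neq[OF assms(3)]]
    by (simp add: mult_pos_neg)
  then have q_r: "q / r < 0" using r by (simp add: divide_neg_pos)
  show "min (1 - r) (- q / r) > 0" using assms(5) q_r by simp
  fix x
  show "Delta m \<beta> (\<lambda>x. 1 + r ^ length x) x \<le> - min (1 - r) (- q / r)"
  proof (cases "x = []")
    case True
    then show ?thesis using Delta_radial_root[OF assms(1), where f = "\<lambda>n. 1 + r ^ n"] by simp
  next
    case False
    have "1 \<le> (r / p_beta \<beta>) ^ length x"
      using p assms(4) by (simp add: one_le_power)
    then have "(r / p_beta \<beta>) ^ length x * (q / r) \<le> q / r"
      using mult_right_mono_neg[of 1 _ "q / r"] q_r by simp
    also have "\<dots> \<le> - min (1 - r) (- q / r)" by simp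
    finally show ?thesis
      using Delta_geometric[OF assms(1) False] r unfolding q_def by simp
  qed
qed

lemma uniformly_negative_Delta_in_A_set:
  assumes "0 < c" and "\<And>x. x \<in> tree m \<Longrightarrow> c < v x \<and> v x < C"
    and "\<delta> > 0" and "\<And>x. x \<in> tree m \<Longrightarrow> Delta m \<beta> v x \<le> - \<delta>"
  shows "\<delta> / C \<in> A_set m \<beta>"
proof -
  have "c < C" using assms(2)[of "[]"] by (simp add: tree_def)
  then have C: "0 < C" using assms(1) by simp
  have "Delta m \<beta> v x + \<delta> / C * v x \<le> 0" if "x \<in> tree m" for x
  proof -
    have "\<delta> / C * v x \<le> \<delta> / C * C"
      using assms(2)[OF that] assms(3) C by (intro mult_left_mono) auto
    then show ?thesis using assms(4)[OF that] C by simp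
  qed
  then show ?thesis
    unfolding A_set_def using assms(1-3) C \<open>c < C\<close> by (auto intro!: exI[of _ v])
qed

lemma lambda1_pos:
  assumes "A_set m \<beta> \<noteq> {}"
  shows "lambda1 m \<beta> > 0"
proof -
  obtain l where l: "l \<in> A_set m \<beta>" using assms by blast
  then have "0 < ereal l" by (simp add: A_set_def)
  also have "ereal l \<le> lambda1 m \<beta>"
    unfolding lambda1_def using l by (intro Sup_upper) simp
  finally show ?thesis .
qed

theorem lemma5p1:
  fixes m :: nat and \<beta> :: real
  assumes "m \<ge> 2" and "0 < \<beta>" and "\<beta> < 1/2"
  shows "A_set m \<beta> \<noteq> {} \<and> lambda1 m \<beta> > 0"
proof -
  define r where "r = (1 + p_beta \<beta>) / 2"
  have p: "0 < p_beta \<beta>" "p_beta \<beta> < 1"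
    using assms by (simp_all add: p_beta_pos p_beta_less_one)
  then have r: "p_beta \<beta> < r" "r < 1" "0 < r" unfolding r_def by auto
  obtain \<delta> where "\<delta> > 0" and "\<And>x. Delta m \<beta> (\<lambda>x. 1 + r ^ length x) x \<le> - \<delta>"
    using Delta_geometric_uniformly_negative[of m \<beta> r] assms r by auto
  moreover have "1 < 1 + r ^ length x \<and> 1 + r ^ length x < (3::real)" for x :: "nat list"
    using r power_le_one[of r "length x"] by auto
  ultimately have "\<delta> / 3 \<in> A_set m \<beta>"
    by (intro uniformly_negative_Delta_in_A_set[where c = 1]) auto
  then show ?thesis using lambda1_pos by blast
qed

end
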